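(* Let $\mu_0=\sum_{i=1}^{N_0}p_0^i\nu_0^i$ and $\mu_1=\sum_{j=1}^{N_1}p_1^j\nu_1^j$ be Gaussian mixture distributions on $\mathbb{R}^n$, let $\pi^*$ be a minimizer of $\sum_{i,j}W_2(\nu_0^i,\nu_1^j)^2\pi(i,j)$ over $\pi\in\Pi(p_0,p_1)$, and for $t\in[0,1]$ define $\mu_t=\sum_{i,j}\pi^*(i,j)\,\nu_t^{ij}$, where $\nu_t^{ij}$ is the displacement interpolation between $\nu_0^i$ and $\nu_1^j$ defined below. Then $d(\mu_s,\mu_t)=(t-s)\,d(\mu_0,\mu_1)$ for all $0\le s<t\le 1$.
   Context: A Gaussian distribution on $\mathbb{R}^n$ is the normal law $N(m,\Sigma)$ with mean $m\in\mathbb{R}^n$ and symmetric positive definite covariance $\Sigma$. For two Gaussians $\nu_0=N(m_0,\Sigma_0)$, $\nu_1=N(m_1,\Sigma_1)$, $W_2(\nu_0,\nu_1)$ denotes their 2-Wasserstein distance, which equals $W_2(\nu_0,\nu_1)^2=\|m_0-m_1\|^2+\operatorname{trace}\big(\Sigma_0+\Sigma_1-2(\Sigma_0^{1/2}\Sigma_1\Sigma_0^{1/2})^{1/2}\big)$; their displacement interpolation at time $t\in[0,1]$ is the Gaussian $\nu_t=N(m_t,\Sigma_t)$ with $m_t=(1-t)m_0+tm_1$ and $\Sigma_t=\Sigma_0^{-1/2}\big((1-t)\Sigma_0+t(\Sigma_0^{1/2}\Sigma_1\Sigma_0^{1/2})^{1/2}\big)^2\Sigma_0^{-1/2}$. A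 Gaussian mixture distribution is a probability distribution $\mu=\sum_{k=1}^N p^k\nu^k$ with $N$ finite, each $\nu^k$ Gaussian, and $p=(p^1,\dots,p^N)$ a probability vector. For mixtures $\mu_0=\sum_i p_0^i\nu_0^i$, $\mu_1=\sum_j p_1^j\nu_1^j$, $\Pi(p_0,p_1)$ is the set of nonnegative matrices $\pi$ with row sums $p_0^i$ and column sums $p_1^j$, and $d(\mu_0,\mu_1)=\sqrt{\min_{\pi\in\Pi(p_0,p_1)}\sum_{i,j}W_2(\nu_0^i,\nu_1^j)^2\pi(i,j)}$; $d(\mu_s,\mu_t)$ is defined in the same way using the mixture representations $\mu_s=\sum_{i,j}\pi^*(i,j)\nu_s^{ij}$ and $\mu_t=\sum_{i,j}\pi^*(i,j)\nu_t^{ij}$. *)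

theory Defs
  imports "HOL-Analysis.Analysis"
begin

definition sym_mat :: "real^'n^'n \<Rightarrow> bool" where
  "sym_mat A \<longleftrightarrow> transpose A = A"

definition pos_def :: "real^'n^'n \<Rightarrow> bool" where
  "pos_def A \<longleftrightarrow> sym_mat A \<and> (\<forall>x. x \<noteq> 0 \<longrightarrow> x \<bullet> (A *v x) > 0)"

definition pos_semidef :: "real^'n^'n \<Rightarrow> bool" where
  "pos_semidef A \<longleftrightarrow> sym_mat A \<and> (\<forall>x. x \<bullet> (A *v x) \<ge> 0)"

definition msqrt :: "real^'n^'n \<Rightarrow> real^'n^'n" where
  "msqrt A = (THE B. pos_semidef B \<and> B ** B = A)"

text \<open>Squared 2-Wasserstein distance between N(m0,S0) and N(m1,S1).\<close>
definition W2sq :: "real^'n \<Rightarrow> real^'n^'n \<Rightarrow> real^'n \<Rightarrow> real^'n^'n \<Rightarrow> real" where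
  "W2sq m0 S0 m1 S1 =
     (norm (m0 - m1))\<^sup>2 + trace (S0 + S1 - 2 *\<^sub>R msqrt (msqrt S0 ** S1 ** msqrt S0))"

text \<open>Displacement interpolation of Gaussians: mean and covariance at time t.\<close>
definition interp_mean :: "real^'n \<Rightarrow> real^'n \<Rightarrow> real \<Rightarrow> real^'n" where
  "interp_mean m0 m1 t = (1 - t) *\<^sub>R m0 + t *\<^sub>R m1"

definition interp_cov :: "real^'n^'n \<Rightarrow> real^'n^'n \<Rightarrow> real \<Rightarrow> real^'n^'n" where
  "interp_cov S0 S1 t =
     (let R = msqrt S0; Ri = matrix_inv R;
          M = (1 - t) *\<^sub>R S0 + t *\<^sub>R msqrt (R ** S1 ** R)
      in Ri ** M ** M ** Ri)"

text \<open>A Gaussian mixture representation: finite index set I, weights p,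
  means m, covariances S.\<close>
definition gaussian_mixture ::
  "'i set \<Rightarrow> ('i \<Rightarrow> real) \<Rightarrow> ('i \<Rightarrow> real^'n) \<Rightarrow> ('i \<Rightarrow> real^'n^'n) \<Rightarrow> bool" where
  "gaussian_mixture I p m S \<longleftrightarrow>
     finite I \<and> (\<forall>i\<in>I. 0 \<le> p i) \<and> sum p I = 1 \<and> (\<forall>i\<in>I. pos_def (S i))"

definition couplings ::
  "'i set \<Rightarrow> 'j set \<Rightarrow> ('i \<Rightarrow> real) \<Rightarrow> ('j \<Rightarrow> real) \<Rightarrow> ('i \<Rightarrow> 'j \<Rightarrow> real) set" where
  "couplings I J p q =
     {\<pi>. (\<forall>i\<in>I. \<forall>j\<in>J. 0 \<le> \<pi> i j) \<and>
          (\<forall>i\<in>I. (\<Sum>j\<in>J. \<pi> i j) = p i) \<and>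
          (\<forall>j\<in>J. (\<Sum>i\<in>I. \<pi> i j) = q j)}"

definition mix_cost ::
  "'i set \<Rightarrow> ('i \<Rightarrow> real^'n) \<Rightarrow> ('i \<Rightarrow> real^'n^'n) \<Rightarrow>
   'j set \<Rightarrow> ('j \<Rightarrow> real^'n) \<Rightarrow> ('j \<Rightarrow> real^'n^'n) \<Rightarrow> ('i \<Rightarrow> 'j \<Rightarrow> real) \<Rightarrow> real" where
  "mix_cost I m S J m' S' \<pi> = (\<Sum>i\<in>I. \<Sum>j\<in>J. W2sq (m i) (S i) (m' j) (S' j) * \<pi> i j)"

text \<open>The distance d between two mixture representations (the minimum over
  couplings, which is attained, written as an infimum).\<close>
definition mix_dist ::
  "'i set \<Rightarrow> ('i \<Rightarrow> real) \<Rightarrow> ('i \<Rightarrow> real^'n) \<Rightarrow> ('i \<Rightarrow> real^'n^'n) \<Rightarrow>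
   'j set \<Rightarrow> ('j \<Rightarrow> real) \<Rightarrow> ('j \<Rightarrow> real^'n) \<Rightarrow> ('j \<Rightarrow> real^'n^'n) \<Rightarrow> real" where
  "mix_dist I p m S J q m' S' =
     sqrt (Inf (mix_cost I m S J m' S' ` couplings I J p q))"

end

(*
  A Gaussian N(m, S) is represented by any pair (m, A) with A A^T = S. For a fixed
  representative A of the first Gaussian, W2sq is the minimum of |m - m'|^2 + |A - B|^2
  (Frobenius norm) over the representatives B of the second one; this is a trace inequality
  proved by polar decomposition. Hence sqrt W2sq inherits the triangle inequality from the
  Euclidean norm of pairs. The displacement interpolant nu_t is represented by the affine path
  (1 - t) (m0, S0^(1/2)) + t (m1, B) between optimal representatives, so
  W2(nu_u, nu_v) <= |u - v| W2(nu_0, nu_1).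

  For the mixtures, matching every component (i, j) of mu_s with the same component of mu_t
  costs at most (t - s)^2 d(mu_0, mu_1)^2. Conversely, a coupling gamma of mu_s and mu_t glued
  with pi* on both sides is a coupling of p0 and p1, so it costs at least as much as pi*.
  Bounding W2(nu_0^i, nu_1^l) along nu_0^i, nu_s^ij, nu_t^kl, nu_1^l and applying Minkowski's
  inequality gives d(mu_0, mu_1) <= (s + 1 - t) d(mu_0, mu_1) + cost(gamma)^(1/2).
*)

theory Submission
  imports Defs
begin

section \<open>The spectral theorem for symmetric matrices\<close>

lemma sym_mat_inner:
  fixes A :: "real^'n^'n"
  assumes "sym_mat A"
  shows "x \<bullet> (A *v y) = (A *v x) \<bullet> y"
  by (metis assms dot_lmul_matrix sym_mat_def vector_transpose_matrix)

lemma transpose_add: "transpose (A + B) = transpose A + transpose B"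
  by (simp add: transpose_def vec_eq_iff)

lemma transpose_diff: "transpose (A - B) = transpose A - transpose B"
  by (simp add: transpose_def vec_eq_iff)

lemma matrix_diff_ldistrib: "(A::real^'n^'m) ** (B - C) = A ** B - A ** C"
  by (simp add: matrix_matrix_mult_def vec_eq_iff algebra_simps sum_subtractf)

lemma matrix_diff_rdistrib: "((A::real^'n^'m) - B) ** C = A ** C - B ** C"
  by (simp add: matrix_matrix_mult_def vec_eq_iff algebra_simps sum_subtractf)

lemma matrix_vector_mult_sum: "(A::real^'n^'m) *v (\<Sum>b\<in>B. f b) = (\<Sum>b\<in>B. A *v f b)"
  by (rule linear_sum[OF matrix_vector_mul_linear])

lemma quadratic_nonneg_imp_linear_coeff_eq_0:
  fixes a b :: real
  assumes "\<And>e. 0 \<le> a * e + b * e\<^sup>2"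
  shows "a = 0"
proof (rule ccontr)
  assume "a \<noteq> 0"
  define c where "c = \<bar>b\<bar> + 1"
  have c: "c > 0" "b - c < 0" by (simp_all add: c_def)
  have "0 \<le> a * (- a / c) + b * (- a / c)\<^sup>2" by (rule assms)
  also have "\<dots> = a\<^sup>2 * (b - c) / c\<^sup>2"
    using c by (simp add: power2_eq_square field_simps)
  finally have "0 \<le> a\<^sup>2 * (b - c)" using c by (simp add: zero_le_divide_iff)
  with \<open>a \<noteq> 0\<close> c show False by (simp add: zero_le_mult_iff)
qed

lemma nonneg_quadratic_form_zero_imp_inner_zero:
  fixes M :: "real^'n^'n"
  assumes sym: "sym_mat M" and V: "subspace V" and nonneg: "\<forall>z\<in>V. 0 \<le> z \<bullet> (M *v z)"
    and x: "x \<in> V" "x \<bullet> (M *v x) = 0" and y: "y \<in> V"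
  shows "y \<bullet> (M *v x) = 0"
proof -
  have "0 \<le> (2 * (y \<bullet> (M *v x))) * e + (y \<bullet> (M *v y)) * e\<^sup>2" for e
  proof -
    have "x + e *\<^sub>R y \<in> V" using V x y by (simp add: subspace_add subspace_scale)
    then have "0 \<le> (x + e *\<^sub>R y) \<bullet> (M *v (x + e *\<^sub>R y))" using nonneg by blast
    also have "\<dots> = (2 * (y \<bullet> (M *v x))) * e + (y \<bullet> (M *v y)) * e\<^sup>2"
      using sym_mat_inner[OF sym, of x y] x(2)
      by (simp add: matrix_vector_right_distrib matrix_vector_mult_scaleR inner_add_left
          inner_add_right power2_eq_square algebra_simps inner_commute)
    finally show ?thesis .
  qed
  then have "2 * (y \<bullet> (M *v x)) = 0" by (rule quadratic_nonneg_imp_linear_coeff_eq_0)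
  then show ?thesis by simp
qed

lemma pos_semidef_quadratic_form_zero_imp_kernel:
  fixes M :: "real^'n^'n"
  assumes "pos_semidef M" "x \<bullet> (M *v x) = 0"
  shows "M *v x = 0"
  using nonneg_quadratic_form_zero_imp_inner_zero[of M UNIV x "M *v x"] assms
  by (simp add: pos_semidef_def)

definition orthonormal_eigenvectors :: "real^'n^'n \<Rightarrow> (real^'n) set \<Rightarrow> bool" where
  "orthonormal_eigenvectors A B \<longleftrightarrow> finite B \<and> pairwise orthogonal B \<and>
     (\<forall>b\<in>B. norm b = 1 \<and> A *v b = (b \<bullet> (A *v b)) *\<^sub>R b)"

lemma rayleigh_quotient_attains_max:
  fixes A :: "real^'n^'n"
  assumes V: "subspace V" and ne: "V \<noteq> {0}"
  obtains x where "x \<in> V" "norm x = 1" "\<And>z. z \<in> V \<Longrightarrow> z \<bullet> (A *v z) \<le> (x \<bullet> (A *v x)) * (z \<bullet> z)"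
proof -
  let ?K = "V \<inter> sphere 0 1"
  have K: "compact ?K"
    using closed_Int_compact[OF closed_subspace[OF V] compact_sphere] by simp
  obtain v where "v \<in> V" "v \<noteq> 0" using ne V subspace_0 by blast
  then have "v /\<^sub>R norm v \<in> ?K" using V by (simp add: subspace_scale)
  then have "?K \<noteq> {}" by blast
  moreover have "continuous_on ?K (\<lambda>x. x \<bullet> (A *v x))"
    by (intro continuous_intros)
  ultimately obtain x where x: "x \<in> ?K"
    and xmax: "\<And>y. y \<in> ?K \<Longrightarrow> y \<bullet> (A *v y) \<le> x \<bullet> (A *v x)"
    using continuous_attains_sup[OF K] by blast
  have "z \<bullet> (A *v z) \<le> (x \<bullet> (A *v x)) * (z \<bullet> z)" if z: "z \<in> V" for z
  proof (cases "z = 0")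
    case False
    have "z /\<^sub>R norm z \<in> ?K" using z False V by (simp add: subspace_scale)
    then have "(z /\<^sub>R norm z) \<bullet> (A *v (z /\<^sub>R norm z)) \<le> x \<bullet> (A *v x)" by (rule xmax)
    moreover have "(z /\<^sub>R norm z) \<bullet> (A *v (z /\<^sub>R norm z)) = (z \<bullet> (A *v z)) / (norm z)\<^sup>2"
      by (simp add: matrix_vector_mult_scaleR power2_eq_square field_simps)
    ultimately show ?thesis
      using False by (simp add: divide_le_eq power2_norm_eq_inner)
  qed simp
  with x that show ?thesis by auto
qed

lemma sym_mat_eigenvector_in_invariant_subspace:
  fixes A :: "real^'n^'n"
  assumes sym: "sym_mat A" and V: "subspace V" and inv: "\<forall>x\<in>V. A *v x \<in> V"
    and ne: "V \<noteq> {0}"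
  obtains x where "x \<in> V" "norm x = 1" "A *v x = (x \<bullet> (A *v x)) *\<^sub>R x"
proof -
  obtain x where xV: "x \<in> V" and nx: "norm x = 1"
    and xmax: "\<And>z. z \<in> V \<Longrightarrow> z \<bullet> (A *v z) \<le> (x \<bullet> (A *v x)) * (z \<bullet> z)"
    using rayleigh_quotient_attains_max[OF V ne] by blast
  define l where "l = x \<bullet> (A *v x)"
  define M where "M = l *\<^sub>R mat 1 - A"
  have Mv: "M *v z = l *\<^sub>R z - A *v z" for z
    by (simp add: M_def matrix_vector_mult_diff_rdistrib scaleR_matrix_vector_assoc[symmetric])
  have symM: "sym_mat M"
    using sym by (simp add: sym_mat_def M_def transpose_diff transpose_scalar)
  have nonneg: "\<forall>z\<in>V. 0 \<le> z \<bullet> (M *v z)"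
    using xmax by (simp add: Mv inner_diff_right l_def)
  have "x \<bullet> (M *v x) = 0" using nx by (simp add: Mv inner_diff_right l_def norm_eq_1)
  moreover have "M *v x \<in> V" using inv xV V by (simp add: Mv subspace_diff subspace_scale)
  ultimately have "(M *v x) \<bullet> (M *v x) = 0"
    using nonneg_quadratic_form_zero_imp_inner_zero[OF symM V nonneg xV] by blast
  then have "A *v x = l *\<^sub>R x" by (simp add: Mv)
  with that xV nx show ?thesis by (simp add: l_def)
qed

lemma sym_mat_invariant_orthogonal_complement:
  fixes A :: "real^'n^'n"
  assumes sym: "sym_mat A" and inv: "\<forall>y\<in>V. A *v y \<in> V" and ev: "A *v x = \<mu> *\<^sub>R x"
  shows "\<forall>y\<in>V \<inter> {y. x \<bullet> y = 0}. A *v y \<in> V \<inter> {y. x \<bullet> y = 0}"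
proof
  fix y assume y: "y \<in> V \<inter> {y. x \<bullet> y = 0}"
  have "x \<bullet> (A *v y) = (A *v x) \<bullet> y" by (rule sym_mat_inner[OF sym])
  also have "\<dots> = 0" using y by (simp add: ev)
  finally show "A *v y \<in> V \<inter> {y. x \<bullet> y = 0}" using y inv by simp
qed

lemma subspace_subset_span_insert_orthogonal_complement:
  assumes V: "subspace V" and x: "x \<in> V" "x \<bullet> x = 1"
    and B: "V \<inter> {y. x \<bullet> y = 0} \<subseteq> span B"
  shows "V \<subseteq> span (insert x B)"
proof
  fix v assume v: "v \<in> V"
  have "v - (x \<bullet> v) *\<^sub>R x \<in> V \<inter> {y. x \<bullet> y = 0}"
    using v x V by (simp add: subspace_diff subspace_scale inner_diff_right)
  then have "v - (x \<bullet> v) *\<^sub>R x \<in> span (insert x B)"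
    using B span_mono[of B "insert x B"] by auto
  then show "v \<in> span (insert x B)"
    by (metis diff_add_cancel span_add span_base span_scale insertI1)
qed

lemma sym_mat_orthonormal_eigenvectors_span_invariant_subspace:
  fixes A :: "real^'n^'n"
  assumes sym: "sym_mat A"
  shows "subspace V \<Longrightarrow> \<forall>x\<in>V. A *v x \<in> V \<Longrightarrow>
    \<exists>B\<subseteq>V. orthonormal_eigenvectors A B \<and> V \<subseteq> span B"
proof (induction "dim V" arbitrary: V rule: less_induct)
  case less
  show ?case
  proof (cases "V = {0}")
    case True
    then show ?thesis by (intro exI[of _ "{}"]) (auto simp: orthonormal_eigenvectors_def)
  next
    case False
    obtain x where xV: "x \<in> V" and nx: "norm x = 1" and ex: "A *v x = (x \<bullet> (A *v x)) *\<^sub>R x"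
      using sym_mat_eigenvector_in_invariant_subspace[OF sym less.prems False] by blast
    have xx: "x \<bullet> x = 1" using nx by (simp add: norm_eq_1)
    define V' where "V' = V \<inter> {y. x \<bullet> y = 0}"
    have sV': "subspace V'" unfolding V'_def
      by (intro subspace_inter less.prems(1) subspace_hyperplane)
    have "x \<notin> V'" using xx by (simp add: V'_def)
    then have "V' \<subset> V" using xV unfolding V'_def by blast
    then have "dim V' < dim V"
      using sV' less.prems(1) by (metis dim_psubset span_eq_iff)
    from less.hyps[OF this sV'] obtain B
      where B: "B \<subseteq> V'" "orthonormal_eigenvectors A B" "V' \<subseteq> span B"
      using sym_mat_invariant_orthogonal_complement[OF sym less.prems(2) ex] by (auto simp: V'_def)
    show ?thesis
    proof (intro exI[of _ "insert x B"] conjI)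
      show "insert x B \<subseteq> V" using B(1) xV by (auto simp: V'_def)
      show "orthonormal_eigenvectors A (insert x B)"
        using B(1,2) nx ex unfolding orthonormal_eigenvectors_def pairwise_insert
        by (auto simp: V'_def orthogonal_def inner_commute)
      show "V \<subseteq> span (insert x B)"
        using subspace_subset_span_insert_orthogonal_complement[OF less.prems(1) xV xx] B(3)
        by (simp add: V'_def)
    qed
  qed
qed

lemma sym_mat_orthonormal_eigenbasis:
  fixes A :: "real^'n^'n"
  assumes "sym_mat A"
  obtains B where "orthonormal_eigenvectors A B" "\<And>y. (\<Sum>b\<in>B. (y \<bullet> b) *\<^sub>R b) = y"
proof -
  obtain B where B: "orthonormal_eigenvectors A B" "UNIV \<subseteq> span B"
    using sym_mat_orthonormal_eigenvectors_span_invariant_subspace[OF assms, of UNIV] by auto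
  then have "(\<Sum>b\<in>B. (y \<bullet> b) *\<^sub>R b) = y" for y
    by (intro orthonormal_basis_expand) (auto simp: orthonormal_eigenvectors_def)
  with B that show ?thesis by blast
qed

section \<open>Square roots of positive semidefinite matrices\<close>

definition spectral_mat :: "(real^'n) set \<Rightarrow> (real^'n \<Rightarrow> real) \<Rightarrow> real^'n^'n" where
  "spectral_mat B f = (\<chi> i j. \<Sum>b\<in>B. f b * b $ i * b $ j)"

lemma spectral_mat_mult_vector: "spectral_mat B f *v y = (\<Sum>b\<in>B. (f b * (b \<bullet> y)) *\<^sub>R b)"
  by (simp add: spectral_mat_def vec_eq_iff matrix_vector_mult_def inner_vec_def sum_distrib_left
      sum_distrib_right sum_component algebra_simps) (subst sum.swap, simp add: algebra_simps)

lemma spectral_mat_cong: "(\<And>b. b \<in> B \<Longrightarrow> f b = g b) \<Longrightarrow> spectral_mat B f = spectral_mat B g"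
  by (simp add: spectral_mat_def cong: sum.cong)

lemma sym_mat_spectral_mat: "sym_mat (spectral_mat B f)"
  by (simp add: sym_mat_def spectral_mat_def transpose_def vec_eq_iff algebra_simps)

lemma inner_spectral_mat:
  assumes "finite B" "pairwise orthogonal B" "\<forall>b\<in>B. norm b = 1" "c \<in> B"
  shows "c \<bullet> (spectral_mat B f *v y) = f c * (c \<bullet> y)"
proof -
  have "c \<bullet> (spectral_mat B f *v y) = (\<Sum>b\<in>B. if b = c then f b * (b \<bullet> y) else 0)"
    unfolding spectral_mat_mult_vector inner_sum_right
    using assms(2-4) by (intro sum.cong) (auto simp: pairwise_def orthogonal_def norm_eq_1)
  then show ?thesis using assms(1,4) by simp
qed

lemma spectral_mat_mult_self:
  assumes "finite B" "pairwise orthogonal B" "\<forall>b\<in>B. norm b = 1"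
  shows "spectral_mat B f ** spectral_mat B f = spectral_mat B (\<lambda>b. (f b)\<^sup>2)"
proof (subst matrix_eq, intro allI)
  fix y
  have "(spectral_mat B f ** spectral_mat B f) *v y
      = (\<Sum>b\<in>B. (f b * (b \<bullet> (spectral_mat B f *v y))) *\<^sub>R b)"
    by (simp add: spectral_mat_mult_vector matrix_vector_mul_assoc[symmetric])
  also have "\<dots> = (\<Sum>b\<in>B. (f b * (f b * (b \<bullet> y))) *\<^sub>R b)"
    by (intro sum.cong refl) (simp add: inner_spectral_mat[OF assms])
  also have "\<dots> = spectral_mat B (\<lambda>b. (f b)\<^sup>2) *v y"
    by (simp add: spectral_mat_mult_vector power2_eq_square mult.assoc)
  finally show "(spectral_mat B f ** spectral_mat B f) *v y = spectral_mat B (\<lambda>b. (f b)\<^sup>2) *v y" .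
qed

lemma spectral_decomposition:
  assumes B: "orthonormal_eigenvectors A B" and expand: "\<And>y. (\<Sum>b\<in>B. (y \<bullet> b) *\<^sub>R b) = y"
  shows "A = spectral_mat B (\<lambda>b. b \<bullet> (A *v b))"
proof -
  define l where "l = (\<lambda>b. b \<bullet> (A *v b))"
  have ev: "A *v b = l b *\<^sub>R b" if "b \<in> B" for b
    using B that unfolding orthonormal_eigenvectors_def l_def by blast
  have "A *v y = spectral_mat B l *v y" for y
  proof -
    have "A *v y = A *v (\<Sum>b\<in>B. (y \<bullet> b) *\<^sub>R b)" by (simp add: expand)
    also have "\<dots> = (\<Sum>b\<in>B. (y \<bullet> b) *\<^sub>R (A *v b))"
      by (simp add: matrix_vector_mult_sum matrix_vector_mult_scaleR)
    also have "\<dots> = (\<Sum>b\<in>B. (l b * (b \<bullet> y)) *\<^sub>R b)"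
      by (intro sum.cong refl) (simp add: ev inner_commute mult.commute)
    finally show ?thesis by (simp add: spectral_mat_mult_vector)
  qed
  then have "A = spectral_mat B l" by (subst matrix_eq) blast
  then show ?thesis by (simp only: l_def)
qed

lemma pos_semidef_sqrt_exists:
  fixes A :: "real^'n^'n"
  assumes "pos_semidef A"
  shows "\<exists>Q. pos_semidef Q \<and> Q ** Q = A"
proof -
  obtain B where B: "orthonormal_eigenvectors A B" and expand: "\<And>y. (\<Sum>b\<in>B. (y \<bullet> b) *\<^sub>R b) = y"
    using sym_mat_orthonormal_eigenbasis assms pos_semidef_def by blast
  have orthonormal: "finite B" "pairwise orthogonal B" "\<forall>b\<in>B. norm b = 1"
    using B unfolding orthonormal_eigenvectors_def by blast+
  define l where "l = (\<lambda>b. b \<bullet> (A *v b))"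
  have l0: "l b \<ge> 0" for b using assms by (simp add: l_def pos_semidef_def)
  define Q where "Q = spectral_mat B (\<lambda>b. sqrt (l b))"
  have "pos_semidef Q"
    unfolding pos_semidef_def
  proof (intro conjI allI)
    show "sym_mat Q" by (simp add: Q_def sym_mat_spectral_mat)
    fix y
    have "y \<bullet> (Q *v y) = (\<Sum>b\<in>B. sqrt (l b) * (b \<bullet> y)\<^sup>2)"
      by (simp add: Q_def spectral_mat_mult_vector inner_sum_right power2_eq_square
          inner_commute mult.assoc)
    also have "\<dots> \<ge> 0" using l0 by (intro sum_nonneg) simp
    finally show "y \<bullet> (Q *v y) \<ge> 0" .
  qed
  moreover have "Q ** Q = spectral_mat B l"
    using l0 by (simp add: Q_def spectral_mat_mult_self[OF orthonormal])
  then have "Q ** Q = A"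
    using spectral_decomposition[OF B expand] by (simp add: l_def)
  ultimately show ?thesis by blast
qed

text \<open>If \<open>B\<^sup>2 = C\<^sup>2\<close> then \<open>D = B - C\<close> satisfies \<open>B D + D C = 0\<close>; testing this against an
  eigenvector of \<open>D\<close> shows that all eigenvalues of \<open>D\<close> vanish.\<close>
lemma pos_semidef_sqrt_unique:
  fixes B C :: "real^'n^'n"
  assumes B: "pos_semidef B" and C: "pos_semidef C" and eq: "B ** B = C ** C"
  shows "B = C"
proof -
  define D where "D = B - C"
  have symD: "sym_mat D" using B C
    by (simp add: pos_semidef_def sym_mat_def D_def transpose_diff)
  have BD: "B ** D + D ** C = 0"
    using eq by (simp add: D_def matrix_diff_ldistrib matrix_diff_rdistrib)
  obtain E where E: "orthonormal_eigenvectors D E" and expand: "\<And>y. (\<Sum>b\<in>E. (y \<bullet> b) *\<^sub>R b) = y"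
    using sym_mat_orthonormal_eigenbasis[OF symD] by blast
  have eig0: "b \<bullet> (D *v b) = 0" if b: "b \<in> E" for b
  proof -
    define \<mu> where "\<mu> = b \<bullet> (D *v b)"
    have ev: "D *v b = \<mu> *\<^sub>R b" using E b by (auto simp: \<mu>_def orthonormal_eigenvectors_def)
    have "0 = b \<bullet> ((B ** D + D ** C) *v b)" using BD by simp
    also have "\<dots> = \<mu> * (b \<bullet> (B *v b) + b \<bullet> (C *v b))"
      using sym_mat_inner[OF symD, of b "C *v b"]
      by (simp add: matrix_vector_mult_add_rdistrib matrix_vector_mul_assoc[symmetric] ev
          inner_add_right matrix_vector_mult_scaleR distrib_left)
    finally have "\<mu> = 0 \<or> b \<bullet> (B *v b) + b \<bullet> (C *v b) = 0" by simp
    moreover have "b \<bullet> (B *v b) \<ge> 0" "b \<bullet> (C *v b) \<ge> 0"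
      using B C by (auto simp: pos_semidef_def)
    ultimately have "\<mu> = 0 \<or> b \<bullet> (B *v b) = 0 \<and> b \<bullet> (C *v b) = 0" by linarith
    then show ?thesis
    proof
      assume "b \<bullet> (B *v b) = 0 \<and> b \<bullet> (C *v b) = 0"
      then have "B *v b = 0" "C *v b = 0"
        using pos_semidef_quadratic_form_zero_imp_kernel B C by blast+
      then show ?thesis by (simp add: D_def matrix_vector_mult_diff_rdistrib)
    qed (simp add: \<mu>_def)
  qed
  have "D = spectral_mat E (\<lambda>b. b \<bullet> (D *v b))" by (rule spectral_decomposition[OF E expand])
  also have "\<dots> = spectral_mat E (\<lambda>_. 0)" by (rule spectral_mat_cong) (rule eig0)
  finally show ?thesis by (simp add: D_def spectral_mat_def vec_eq_iff)
qed

lemma msqrt_pos_semidef: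
  fixes A :: "real^'n^'n"
  assumes "pos_semidef A"
  shows "pos_semidef (msqrt A)" "msqrt A ** msqrt A = A"
proof -
  have "\<exists>!Q. pos_semidef Q \<and> Q ** Q = A"
    using pos_semidef_sqrt_exists[OF assms] pos_semidef_sqrt_unique by metis
  then have "pos_semidef (msqrt A) \<and> msqrt A ** msqrt A = A"
    unfolding msqrt_def by (rule theI')
  then show "pos_semidef (msqrt A)" "msqrt A ** msqrt A = A" by auto
qed

lemma pos_def_imp_pos_semidef: "pos_def S \<Longrightarrow> pos_semidef S"
  unfolding pos_def_def pos_semidef_def by (metis inner_zero_left order.refl less_imp_le)

lemma invertible_if_kernel_trivial:
  fixes A :: "real^'n^'n"
  assumes "\<And>x. A *v x = 0 \<Longrightarrow> x = 0"
  shows "invertible A"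
  using assms matrix_left_invertible_ker invertible_left_inverse by metis

lemma pos_def_invertible:
  fixes S :: "real^'n^'n"
  shows "pos_def S \<Longrightarrow> invertible S"
  by (rule invertible_if_kernel_trivial) (auto simp: pos_def_def)

lemma matrix_inv_mult:
  fixes A :: "real^'n^'n"
  assumes "invertible A"
  shows "A ** matrix_inv A = mat 1" "matrix_inv A ** A = mat 1"
proof -
  have "A ** matrix_inv A = mat 1 \<and> matrix_inv A ** A = mat 1"
    using assms unfolding invertible_def matrix_inv_def by (rule someI_ex)
  then show "A ** matrix_inv A = mat 1" "matrix_inv A ** A = mat 1" by auto
qed

lemma transpose_matrix_inv_sym:
  fixes R :: "real^'n^'n"
  assumes "transpose R = R" "invertible R"
  shows "transpose (matrix_inv R) = matrix_inv R"
proof -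
  have "transpose (matrix_inv R) = transpose (matrix_inv R) ** (R ** matrix_inv R)"
    by (simp add: matrix_inv_mult(1)[OF assms(2)])
  also have "\<dots> = transpose (R ** matrix_inv R) ** matrix_inv R"
    by (simp add: matrix_mul_assoc matrix_transpose_mul assms(1))
  finally show ?thesis by (simp add: matrix_inv_mult(1)[OF assms(2)])
qed

lemma pos_def_congruence:
  fixes S R :: "real^'n^'n"
  assumes S: "pos_def S" and R: "invertible R"
  shows "pos_def (transpose R ** S ** R)"
  unfolding pos_def_def
proof (intro conjI allI impI)
  show "sym_mat (transpose R ** S ** R)"
    using S by (simp add: sym_mat_def pos_def_def matrix_transpose_mul matrix_mul_assoc)
  fix x :: "real^'n" assume "x \<noteq> 0"
  then have "R *v x \<noteq> 0"
    using inj_matrix_vector_mult[OF R] by (metis injD matrix_vector_mult_0_right)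
  then have "(R *v x) \<bullet> (S *v (R *v x)) > 0" using S by (simp add: pos_def_def)
  moreover have "x \<bullet> ((transpose R ** S ** R) *v x) = (R *v x) \<bullet> (S *v (R *v x))"
    by (simp add: matrix_vector_mul_assoc[symmetric]) (metis dot_lmul_matrix inner_commute)
  ultimately show "x \<bullet> ((transpose R ** S ** R) *v x) > 0" by simp
qed

lemma pos_def_mult_transpose:
  fixes A :: "real^'n^'n"
  assumes "invertible A"
  shows "pos_def (A ** transpose A)"
proof -
  have "pos_def (mat 1 :: real^'n^'n)" by (simp add: pos_def_def sym_mat_def)
  from pos_def_congruence[OF this transpose_invertible[OF assms]] show ?thesis by simp
qed

lemma msqrt_pos_def:
  fixes S :: "real^'n^'n"
  assumes S: "pos_def S"
  shows "pos_def (msqrt S)" "transpose (msqrt S) = msqrt S" "msqrt S ** msqrt S = S"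
    "invertible (msqrt S)"
proof -
  note psd = msqrt_pos_semidef[OF pos_def_imp_pos_semidef[OF S]]
  show sq: "msqrt S ** msqrt S = S" by (rule psd(2))
  have ker: "x = 0" if "msqrt S *v x = 0" for x
  proof (rule ccontr)
    assume "x \<noteq> 0"
    then have "x \<bullet> (S *v x) > 0" using S by (simp add: pos_def_def)
    moreover have "S *v x = 0" using that sq by (metis matrix_vector_mul_assoc matrix_vector_mult_0_right)
    ultimately show False by simp
  qed
  show "pos_def (msqrt S)"
    unfolding pos_def_def
  proof (intro conjI allI impI)
    show "sym_mat (msqrt S)" using psd(1) by (simp add: pos_semidef_def)
    fix x :: "real^'n" assume "x \<noteq> 0"
    then have "x \<bullet> (msqrt S *v x) \<noteq> 0"
      using pos_semidef_quadratic_form_zero_imp_kernel[OF psd(1)] ker by blast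
    moreover have "x \<bullet> (msqrt S *v x) \<ge> 0" using psd(1) by (simp add: pos_semidef_def)
    ultimately show "x \<bullet> (msqrt S *v x) > 0" by simp
  qed
  show "transpose (msqrt S) = msqrt S" using psd(1) by (simp add: pos_semidef_def sym_mat_def)
  show "invertible (msqrt S)" using ker by (rule invertible_if_kernel_trivial)
qed

section \<open>The Wasserstein distance between Gaussians via factors\<close>

lemma inner_matrix_eq_trace: "inner (X::real^'n^'m) Y = trace (transpose X ** Y)"
  by (simp add: inner_vec_def trace_def transpose_def matrix_matrix_mult_def) (subst sum.swap, rule refl)

lemma norm_matrix_sq_eq_trace: "(norm (X::real^'n^'m))\<^sup>2 = trace (transpose X ** X)"
  by (simp add: power2_norm_eq_inner inner_matrix_eq_trace)

lemma trace_scaleR: "trace (c *\<^sub>R (X::real^'n^'n)) = c * trace X"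
  by (simp add: trace_def sum_distrib_left)

lemma norm_diff_sq_eq_trace:
  fixes A B :: "real^'n^'n"
  shows "(norm (A - B))\<^sup>2 =
    trace (A ** transpose A) + trace (B ** transpose B) - 2 * trace (transpose A ** B)"
proof -
  have "(norm (A - B))\<^sup>2 = (norm A)\<^sup>2 + (norm B)\<^sup>2 - 2 * inner A B"
    by (simp add: power2_norm_eq_inner inner_diff_left inner_diff_right inner_commute)
  then show ?thesis
    by (simp add: norm_matrix_sq_eq_trace inner_matrix_eq_trace trace_mul_sym[of "transpose A"]
        trace_mul_sym[of "transpose B"])
qed

lemma norm_mult_orthogonal_matrix:
  fixes X U :: "real^'n^'n"
  assumes "orthogonal_matrix U"
  shows "norm (X ** U) = norm X"
proof -
  have "(norm (X ** U))\<^sup>2 = trace (transpose U ** (transpose X ** X ** U))"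
    by (simp add: norm_matrix_sq_eq_trace matrix_transpose_mul matrix_mul_assoc)
  also have "\<dots> = trace ((transpose X ** X ** U) ** transpose U)" by (rule trace_mul_sym)
  also have "\<dots> = (norm X)\<^sup>2"
    using assms by (simp add: norm_matrix_sq_eq_trace orthogonal_matrix_def matrix_mul_assoc[symmetric])
  finally show ?thesis by simp
qed

text \<open>Cauchy-Schwarz for the Frobenius inner product, applied to \<open>K\<^sup>1\<^sup>/\<^sup>2\<close> and \<open>K\<^sup>1\<^sup>/\<^sup>2 Q\<close>.\<close>
lemma trace_mult_orthogonal_le:
  fixes K Q :: "real^'n^'n"
  assumes K: "pos_semidef K" and Q: "orthogonal_matrix Q"
  shows "trace (K ** Q) \<le> trace K"
proof -
  define G where "G = msqrt K"
  have Gt: "transpose G = G" and GG: "G ** G = K"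
    using msqrt_pos_semidef[OF K] by (auto simp: G_def pos_semidef_def sym_mat_def)
  have "trace (K ** Q) = inner G (G ** Q)"
    by (simp add: inner_matrix_eq_trace Gt GG[symmetric] matrix_mul_assoc)
  also have "\<dots> \<le> norm G * norm (G ** Q)" by (rule norm_cauchy_schwarz)
  also have "\<dots> = trace K"
    using norm_matrix_sq_eq_trace[of G] by (simp add: norm_mult_orthogonal_matrix[OF Q]
        power2_eq_square Gt GG)
  finally show ?thesis .
qed

lemma factor_eq_mult_orthogonal_matrix:
  fixes A R :: "real^'n^'n"
  assumes R: "invertible R" and A: "A ** transpose A = R ** transpose R"
  obtains U where "orthogonal_matrix U" "A = R ** U"
proof -
  define U where "U = matrix_inv R ** A"
  have "U ** transpose U = matrix_inv R ** (A ** transpose A) ** transpose (matrix_inv R)"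
    by (simp add: U_def matrix_transpose_mul matrix_mul_assoc)
  also have "\<dots> = (matrix_inv R ** R) ** transpose (matrix_inv R ** R)"
    by (simp add: A matrix_transpose_mul matrix_mul_assoc)
  finally have "orthogonal_matrix U"
    by (simp add: matrix_inv_mult[OF R] orthogonal_matrix_def matrix_left_right_inverse)
  moreover have "A = R ** U" by (simp add: U_def matrix_mul_assoc matrix_inv_mult[OF R])
  ultimately show ?thesis using that by blast
qed

lemma pos_def_msqrt_congruence:
  assumes "pos_def S0" "pos_def S1"
  shows "pos_def (msqrt S0 ** S1 ** msqrt S0)"
  using pos_def_congruence[OF assms(2) msqrt_pos_def(4)[OF assms(1)]] msqrt_pos_def(2)[OF assms(1)]
  by simp

text \<open>With \<open>R = S0\<^sup>1\<^sup>/\<^sup>2\<close> and \<open>K = (R S1 R)\<^sup>1\<^sup>/\<^sup>2\<close>, the optimal transport map from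
  \<open>N(0, S0)\<close> to \<open>N(0, S1)\<close> is \<open>R\<^sup>-\<^sup>1 K R\<^sup>-\<^sup>1\<close>; it maps the factor \<open>R\<close> of \<open>S0\<close> to the factor
  \<open>R\<^sup>-\<^sup>1 K\<close> of \<open>S1\<close>.\<close>
definition transport_factor :: "real^'n^'n \<Rightarrow> real^'n^'n \<Rightarrow> real^'n^'n" where
  "transport_factor S0 S1 = matrix_inv (msqrt S0) ** msqrt (msqrt S0 ** S1 ** msqrt S0)"

lemma msqrt_mult_transport_factor:
  assumes "pos_def S0"
  shows "msqrt S0 ** transport_factor S0 S1 = msqrt (msqrt S0 ** S1 ** msqrt S0)"
  by (simp add: transport_factor_def matrix_mul_assoc matrix_inv_mult msqrt_pos_def(4)[OF assms])

lemma transport_factor_mult_transpose: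
  assumes S0: "pos_def S0" and S1: "pos_def S1"
  shows "transport_factor S0 S1 ** transpose (transport_factor S0 S1) = S1"
proof -
  define R where "R = msqrt S0"
  define K where "K = msqrt (R ** S1 ** R)"
  note R = msqrt_pos_def[OF S0, folded R_def]
  note K = msqrt_pos_def[OF pos_def_msqrt_congruence[OF S0 S1], folded R_def, folded K_def]
  have "transport_factor S0 S1 ** transpose (transport_factor S0 S1)
      = matrix_inv R ** (K ** K) ** matrix_inv R"
    by (simp add: transport_factor_def R_def[symmetric] K_def[symmetric] matrix_transpose_mul K(2)
        transpose_matrix_inv_sym[OF R(2,4)] matrix_mul_assoc)
  also have "\<dots> = (matrix_inv R ** R) ** S1 ** (R ** matrix_inv R)"
    unfolding K(3) by (simp add: matrix_mul_assoc)
  finally show ?thesis by (simp add: matrix_inv_mult[OF R(4)])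
qed

lemma W2sq_expand:
  "W2sq m S m' S' =
     (norm (m - m'))\<^sup>2 + trace S + trace S' - 2 * trace (msqrt (msqrt S ** S' ** msqrt S))"
  by (simp add: W2sq_def trace_add trace_sub trace_scaleR)

lemma W2sq_eq_transport_factor:
  assumes S0: "pos_def S0" and S1: "pos_def S1"
  shows "W2sq m0 S0 m1 S1 = (norm (m0 - m1))\<^sup>2 + (norm (msqrt S0 - transport_factor S0 S1))\<^sup>2"
  using norm_diff_sq_eq_trace[of "msqrt S0" "transport_factor S0 S1"]
  by (simp add: W2sq_expand msqrt_pos_def[OF S0] transport_factor_mult_transpose[OF S0 S1]
      msqrt_mult_transport_factor[OF S0])

lemma W2sq_nonneg: "pos_def S0 \<Longrightarrow> pos_def S1 \<Longrightarrow> 0 \<le> W2sq m0 S0 m1 S1"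
  by (simp add: W2sq_eq_transport_factor)

text \<open>Writing \<open>A = R U\<close> and \<open>R B = K Q\<close> with \<open>U, Q\<close> orthogonal reduces the claim to
  \<open>trace (K Q U\<^sup>T) \<le> trace K\<close>.\<close>
lemma trace_transpose_mult_le:
  fixes Sa Sb A B :: "real^'n^'n"
  assumes Sa: "pos_def Sa" and Sb: "pos_def Sb"
    and A: "A ** transpose A = Sa" and B: "B ** transpose B = Sb"
  shows "trace (transpose A ** B) \<le> trace (msqrt (msqrt Sa ** Sb ** msqrt Sa))"
proof -
  define R where "R = msqrt Sa"
  define K where "K = msqrt (R ** Sb ** R)"
  note R = msqrt_pos_def[OF Sa, folded R_def]
  note K = msqrt_pos_def[OF pos_def_msqrt_congruence[OF Sa Sb], folded R_def, folded K_def]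
  obtain U where U: "orthogonal_matrix U" "A = R ** U"
    using factor_eq_mult_orthogonal_matrix[OF R(4)] A R(2,3) by metis
  have "(R ** B) ** transpose (R ** B) = K ** transpose K"
    by (simp add: matrix_transpose_mul R(2) K(2,3) matrix_mul_assoc B[symmetric])
  then obtain Q where Q: "orthogonal_matrix Q" "R ** B = K ** Q"
    using factor_eq_mult_orthogonal_matrix[OF K(4)] by metis
  have "trace (transpose A ** B) = trace (transpose U ** (K ** Q))"
    by (simp add: U(2) Q(2)[symmetric] matrix_transpose_mul R(2) matrix_mul_assoc)
  also have "\<dots> = trace ((K ** Q) ** transpose U)" by (rule trace_mul_sym)
  also have "\<dots> = trace (K ** (Q ** transpose U))" by (simp add: matrix_mul_assoc)
  also have "\<dots> \<le> trace K"
    using U(1) Q(1) by (intro trace_mult_orthogonal_le pos_def_imp_pos_semidef K(1)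
        orthogonal_matrix_mul) (auto simp: orthogonal_matrix_def)
  finally show ?thesis by (simp add: K_def R_def)
qed

lemma W2sq_le_factor_dist:
  fixes Sa Sb A B :: "real^'n^'n"
  assumes "pos_def Sa" "pos_def Sb" "A ** transpose A = Sa" "B ** transpose B = Sb"
  shows "W2sq m Sa m' Sb \<le> (norm (m - m'))\<^sup>2 + (norm (A - B))\<^sup>2"
  using trace_transpose_mult_le[OF assms] by (simp add: W2sq_expand norm_diff_sq_eq_trace assms(3,4))

lemma W2sq_eq_factor_dist:
  fixes Sa Sb A :: "real^'n^'n"
  assumes Sa: "pos_def Sa" and Sb: "pos_def Sb" and A: "A ** transpose A = Sa"
  obtains B where "B ** transpose B = Sb" "W2sq m Sa m' Sb = (norm (m - m'))\<^sup>2 + (norm (A - B))\<^sup>2"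
proof -
  define R where "R = msqrt Sa"
  define B0 where "B0 = transport_factor Sa Sb"
  note R = msqrt_pos_def[OF Sa, folded R_def]
  obtain U where U: "orthogonal_matrix U" "A = R ** U"
    using factor_eq_mult_orthogonal_matrix[OF R(4)] A R(2,3) by metis
  have "(B0 ** U) ** transpose (B0 ** U) = Sb"
    using U(1) transport_factor_mult_transpose[OF Sa Sb]
    by (simp add: B0_def matrix_transpose_mul matrix_mul_assoc orthogonal_matrix_def)
      (simp add: matrix_mul_assoc[symmetric])
  moreover have "norm (A - B0 ** U) = norm (R - B0)"
    by (simp add: U matrix_diff_rdistrib[symmetric] norm_mult_orthogonal_matrix)
  ultimately show ?thesis
    using that W2sq_eq_transport_factor[OF Sa Sb] by (simp add: R_def B0_def)
qed

lemma W2_triangle: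
  fixes Sa Sb Sc :: "real^'n^'n"
  assumes Sa: "pos_def Sa" and Sb: "pos_def Sb" and Sc: "pos_def Sc"
  shows "sqrt (W2sq ma Sa mc Sc) \<le> sqrt (W2sq ma Sa mb Sb) + sqrt (W2sq mb Sb mc Sc)"
proof -
  define A where "A = msqrt Sa"
  have AA: "A ** transpose A = Sa" using msqrt_pos_def[OF Sa] by (simp add: A_def)
  obtain B where B: "B ** transpose B = Sb"
    "W2sq ma Sa mb Sb = (norm (ma - mb))\<^sup>2 + (norm (A - B))\<^sup>2"
    using W2sq_eq_factor_dist[OF Sa Sb AA] by blast
  obtain C where C: "C ** transpose C = Sc"
    "W2sq mb Sb mc Sc = (norm (mb - mc))\<^sup>2 + (norm (B - C))\<^sup>2"
    using W2sq_eq_factor_dist[OF Sb Sc B(1)] by blast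
  have "W2sq ma Sa mc Sc \<le> (norm ((ma, A) - (mc, C)))\<^sup>2"
    using W2sq_le_factor_dist[OF Sa Sc AA C(1)] by (simp add: norm_Pair)
  then have "sqrt (W2sq ma Sa mc Sc) \<le> sqrt ((norm ((ma, A) - (mc, C)))\<^sup>2)"
    by (rule real_sqrt_le_mono)
  also have "\<dots> = norm ((ma, A) - (mc, C))" by simp
  also have "\<dots> \<le> norm ((ma, A) - (mb, B)) + norm ((mb, B) - (mc, C))"
    by (rule norm_diff_triangle_le[OF order.refl order.refl])
  also have "\<dots> = sqrt (W2sq ma Sa mb Sb) + sqrt (W2sq mb Sb mc Sc)"
    by (simp add: B(2) C(2) norm_Pair)
  finally show ?thesis .
qed

section \<open>Displacement interpolation\<close>

lemma pos_def_convex_combination: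
  fixes A B :: "real^'n^'n"
  assumes A: "pos_def A" and B: "pos_def B" and t: "0 \<le> t" "t \<le> 1"
  shows "pos_def ((1 - t) *\<^sub>R A + t *\<^sub>R B)"
  unfolding pos_def_def
proof (intro conjI allI impI)
  show "sym_mat ((1 - t) *\<^sub>R A + t *\<^sub>R B)"
    using A B by (simp add: pos_def_def sym_mat_def transpose_add transpose_scalar)
  fix x :: "real^'n" assume "x \<noteq> 0"
  then have a: "x \<bullet> (A *v x) > 0" and b: "x \<bullet> (B *v x) > 0"
    using A B by (simp_all add: pos_def_def)
  have "x \<bullet> (((1 - t) *\<^sub>R A + t *\<^sub>R B) *v x) = (1 - t) * (x \<bullet> (A *v x)) + t * (x \<bullet> (B *v x))"
    by (simp add: matrix_vector_mult_add_rdistrib scaleR_matrix_vector_assoc[symmetric] inner_add_right)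
  also have "\<dots> > 0"
    using a b t by (cases "t = 1") (simp_all add: add_pos_nonneg)
  finally show "x \<bullet> (((1 - t) *\<^sub>R A + t *\<^sub>R B) *v x) > 0" .
qed

definition interp_factor :: "real^'n^'n \<Rightarrow> real^'n^'n \<Rightarrow> real \<Rightarrow> real^'n^'n" where
  "interp_factor S0 S1 t = (1 - t) *\<^sub>R msqrt S0 + t *\<^sub>R transport_factor S0 S1"

lemma interp_factor_eq:
  assumes "pos_def S0"
  shows "interp_factor S0 S1 t =
    matrix_inv (msqrt S0) ** ((1 - t) *\<^sub>R S0 + t *\<^sub>R msqrt (msqrt S0 ** S1 ** msqrt S0))"
proof -
  note R = msqrt_pos_def[OF assms]
  have "matrix_inv (msqrt S0) ** S0 = msqrt S0"
    by (metis R(3) matrix_inv_mult(2)[OF R(4)] matrix_mul_assoc matrix_mul_lid)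
  then show ?thesis
    by (simp add: interp_factor_def transport_factor_def matrix_add_ldistrib matrix_scalar_ac
        scalar_matrix_assoc[symmetric])
qed

lemma interp_cov_eq_factor:
  assumes S0: "pos_def S0" and S1: "pos_def S1"
  shows "interp_cov S0 S1 t = interp_factor S0 S1 t ** transpose (interp_factor S0 S1 t)"
proof -
  define R where "R = msqrt S0"
  define M where "M = (1 - t) *\<^sub>R S0 + t *\<^sub>R msqrt (R ** S1 ** R)"
  note R = msqrt_pos_def[OF S0, folded R_def]
  have "transpose M = M"
    using S0 msqrt_pos_def(2)[OF pos_def_msqrt_congruence[OF S0 S1]]
    by (simp add: M_def R_def transpose_add transpose_scalar pos_def_def sym_mat_def)
  then have "interp_factor S0 S1 t ** transpose (interp_factor S0 S1 t) = matrix_inv R ** M ** M ** matrix_inv R"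
    by (simp add: interp_factor_eq[OF S0] R_def[symmetric] M_def[symmetric] matrix_transpose_mul
        transpose_matrix_inv_sym[OF R(2,4)] matrix_mul_assoc)
  then show ?thesis by (simp add: interp_cov_def Let_def R_def M_def)
qed

lemma interp_cov_pos_def:
  assumes S0: "pos_def S0" and S1: "pos_def S1" and t: "0 \<le> t" "t \<le> 1"
  shows "pos_def (interp_cov S0 S1 t)"
proof -
  note R = msqrt_pos_def[OF S0]
  have "invertible (matrix_inv (msqrt S0))"
    using matrix_inv_mult[OF R(4)] invertible_left_inverse by blast
  moreover have "invertible ((1 - t) *\<^sub>R S0 + t *\<^sub>R msqrt (msqrt S0 ** S1 ** msqrt S0))"
    using pos_def_convex_combination[OF S0 msqrt_pos_def(1)[OF pos_def_msqrt_congruence[OF S0 S1]] t]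
    by (rule pos_def_invertible)
  ultimately have "invertible (interp_factor S0 S1 t)"
    by (simp add: interp_factor_eq[OF S0] invertible_mult)
  then show ?thesis
    using interp_cov_eq_factor[OF S0 S1] pos_def_mult_transpose by metis
qed

lemma interp_cov_0: "pos_def S0 \<Longrightarrow> pos_def S1 \<Longrightarrow> interp_cov S0 S1 0 = S0"
  by (simp add: interp_cov_eq_factor interp_factor_def msqrt_pos_def)

lemma interp_cov_1: "pos_def S0 \<Longrightarrow> pos_def S1 \<Longrightarrow> interp_cov S0 S1 1 = S1"
  by (simp add: interp_cov_eq_factor interp_factor_def transport_factor_mult_transpose)

lemma W2sq_interp_le:
  assumes S0: "pos_def S0" and S1: "pos_def S1"
    and u: "0 \<le> u" "u \<le> 1" and v: "0 \<le> v" "v \<le> 1"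
  shows "W2sq (interp_mean m0 m1 u) (interp_cov S0 S1 u) (interp_mean m0 m1 v) (interp_cov S0 S1 v)
         \<le> (u - v)\<^sup>2 * W2sq m0 S0 m1 S1"
proof -
  have "W2sq (interp_mean m0 m1 u) (interp_cov S0 S1 u) (interp_mean m0 m1 v) (interp_cov S0 S1 v)
     \<le> (norm (interp_mean m0 m1 u - interp_mean m0 m1 v))\<^sup>2
       + (norm (interp_factor S0 S1 u - interp_factor S0 S1 v))\<^sup>2"
    using interp_cov_pos_def[OF S0 S1] interp_cov_eq_factor[OF S0 S1] u v
    by (intro W2sq_le_factor_dist) auto
  also have "interp_mean m0 m1 u - interp_mean m0 m1 v = (v - u) *\<^sub>R (m0 - m1)"
    by (simp add: interp_mean_def algebra_simps)
  also have "interp_factor S0 S1 u - interp_factor S0 S1 v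
      = (v - u) *\<^sub>R (msqrt S0 - transport_factor S0 S1)"
    by (simp add: interp_factor_def algebra_simps)
  also have "(norm ((v - u) *\<^sub>R (m0 - m1)))\<^sup>2
      + (norm ((v - u) *\<^sub>R (msqrt S0 - transport_factor S0 S1)))\<^sup>2 = (u - v)\<^sup>2 * W2sq m0 S0 m1 S1"
    by (simp add: W2sq_eq_transport_factor[OF S0 S1] power_mult_distrib power2_commute[of v u]
        distrib_left)
  finally show ?thesis .
qed

lemma W2_le_through_interpolants:
  assumes S0: "pos_def S0" "pos_def S0'" and S1: "pos_def S1" "pos_def S1'"
    and s: "0 \<le> s" "s \<le> 1" and t: "0 \<le> t" "t \<le> 1"
  shows "sqrt (W2sq m0 S0 m1' S1') \<le> s * sqrt (W2sq m0 S0 m1 S1)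
    + sqrt (W2sq (interp_mean m0 m1 s) (interp_cov S0 S1 s) (interp_mean m0' m1' t) (interp_cov S0' S1' t))
    + (1 - t) * sqrt (W2sq m0' S0' m1' S1')"
proof -
  let ?Ms = "interp_mean m0 m1 s" and ?Cs = "interp_cov S0 S1 s"
  let ?Mt = "interp_mean m0' m1' t" and ?Ct = "interp_cov S0' S1' t"
  have Cs: "pos_def ?Cs" and Ct: "pos_def ?Ct"
    using interp_cov_pos_def S0 S1 s t by blast+
  have "W2sq m0 S0 ?Ms ?Cs \<le> (0 - s)\<^sup>2 * W2sq m0 S0 m1 S1"
    using W2sq_interp_le[OF S0(1) S1(1), of 0 s m0 m1] s
    by (simp add: interp_mean_def interp_cov_0[OF S0(1) S1(1)])
  then have start: "sqrt (W2sq m0 S0 ?Ms ?Cs) \<le> s * sqrt (W2sq m0 S0 m1 S1)"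
    using s real_sqrt_le_mono by (fastforce simp: real_sqrt_mult)
  have "W2sq ?Mt ?Ct m1' S1' \<le> (t - 1)\<^sup>2 * W2sq m0' S0' m1' S1'"
    using W2sq_interp_le[OF S0(2) S1(2), of t 1 m0' m1'] t
    by (simp add: interp_mean_def interp_cov_1[OF S0(2) S1(2)])
  then have finish: "sqrt (W2sq ?Mt ?Ct m1' S1') \<le> (1 - t) * sqrt (W2sq m0' S0' m1' S1')"
    using t real_sqrt_le_mono by (fastforce simp: real_sqrt_mult power2_commute[of t])
  have "sqrt (W2sq m0 S0 m1' S1') \<le> sqrt (W2sq m0 S0 ?Ms ?Cs) + sqrt (W2sq ?Ms ?Cs m1' S1')"
    by (rule W2_triangle[OF S0(1) Cs S1(2)])
  also have "sqrt (W2sq ?Ms ?Cs m1' S1') \<le> sqrt (W2sq ?Ms ?Cs ?Mt ?Ct) + sqrt (W2sq ?Mt ?Ct m1' S1')"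
    by (rule W2_triangle[OF Cs Ct S1(2)])
  finally show ?thesis using start finish by linarith
qed

section \<open>Couplings and Gaussian mixtures\<close>

lemma coupling_sum_left_marginal:
  assumes "\<pi> \<in> couplings X Y p q"
  shows "(\<Sum>x\<in>X. \<Sum>y\<in>Y. f x * \<pi> x y) = (\<Sum>x\<in>X. f x * p x)"
  using assms by (simp add: couplings_def sum_distrib_left[symmetric])

lemma coupling_sum_right_marginal:
  assumes "\<pi> \<in> couplings X Y p q"
  shows "(\<Sum>x\<in>X. \<Sum>y\<in>Y. f y * \<pi> x y) = (\<Sum>y\<in>Y. f y * q y)"
  using assms by (subst sum.swap) (simp add: couplings_def sum_distrib_left[symmetric])

lemma diagonal_coupling:
  assumes "finite X" "\<forall>x\<in>X. 0 \<le> p x"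
  shows "(\<lambda>x y. if x = y then p x else 0) \<in> couplings X X p p"
  using assms by (simp add: couplings_def if_distrib cong: if_cong)

text \<open>If \<open>((i, j), (k, l))\<close> is distributed according to \<open>\<gamma>\<close>, this is the law of \<open>(i, l)\<close>.\<close>
definition outer_marginal :: "'i set \<Rightarrow> 'j set \<Rightarrow> ('i \<times> 'j \<Rightarrow> 'i \<times> 'j \<Rightarrow> real) \<Rightarrow> 'i \<Rightarrow> 'j \<Rightarrow> real"
  where "outer_marginal I J \<gamma> i l = (\<Sum>j\<in>J. \<Sum>k\<in>I. \<gamma> (i, j) (k, l))"

lemma sum_outer_marginal:
  assumes "finite I" "finite J"
  shows "(\<Sum>i\<in>I. \<Sum>l\<in>J. w i l * outer_marginal I J \<gamma> i l)
    = (\<Sum>x\<in>I \<times> J. \<Sum>y\<in>I \<times> J. w (fst x) (snd y) * \<gamma> x y)"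
proof -
  have "(\<Sum>i\<in>I. \<Sum>l\<in>J. w i l * outer_marginal I J \<gamma> i l)
      = (\<Sum>i\<in>I. \<Sum>j\<in>J. \<Sum>l\<in>J. \<Sum>k\<in>I. w i l * \<gamma> (i, j) (k, l))"
    unfolding outer_marginal_def sum_distrib_left by (intro sum.cong refl sum.swap)
  also have "\<dots> = (\<Sum>i\<in>I. \<Sum>j\<in>J. \<Sum>k\<in>I. \<Sum>l\<in>J. w i l * \<gamma> (i, j) (k, l))"
    by (intro sum.cong refl sum.swap)
  finally show ?thesis by (simp add: sum.cartesian_product')
qed

lemma outer_marginal_in_couplings:
  assumes "finite I" "finite J"
    and \<gamma>: "\<gamma> \<in> couplings (I \<times> J) (I \<times> J) (case_prod \<pi>) (case_prod \<pi>)"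
    and \<pi>: "\<pi> \<in> couplings I J p q"
  shows "outer_marginal I J \<gamma> \<in> couplings I J p q"
proof -
  have row: "(\<Sum>j\<in>J. \<Sum>y\<in>I \<times> J. \<gamma> (i, j) y) = p i" if "i \<in> I" for i
    using \<gamma> \<pi> that by (simp add: couplings_def)
  have col: "(\<Sum>x\<in>I \<times> J. \<Sum>k\<in>I. \<gamma> x (k, l)) = q l" if "l \<in> J" for l
    using \<gamma> \<pi> that by (subst sum.swap) (simp add: couplings_def)
  show ?thesis
    unfolding couplings_def mem_Collect_eq
  proof (intro conjI ballI)
    fix i l assume "i \<in> I" "l \<in> J"
    then show "0 \<le> outer_marginal I J \<gamma> i l"
      using \<gamma> by (auto simp: outer_marginal_def couplings_def intro!: sum_nonneg)
  next
    fix i assume "i \<in> I"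
    have "(\<Sum>l\<in>J. outer_marginal I J \<gamma> i l) = (\<Sum>j\<in>J. \<Sum>l\<in>J. \<Sum>k\<in>I. \<gamma> (i, j) (k, l))"
      unfolding outer_marginal_def by (rule sum.swap)
    also have "\<dots> = (\<Sum>j\<in>J. \<Sum>k\<in>I. \<Sum>l\<in>J. \<gamma> (i, j) (k, l))"
      by (intro sum.cong refl sum.swap)
    also have "\<dots> = p i" using row[OF \<open>i \<in> I\<close>] by (simp add: sum.cartesian_product')
    finally show "(\<Sum>l\<in>J. outer_marginal I J \<gamma> i l) = p i" .
  next
    fix l assume "l \<in> J"
    then show "(\<Sum>i\<in>I. outer_marginal I J \<gamma> i l) = q l"
      using col by (simp add: outer_marginal_def sum.cartesian_product')
  qed
qed

text \<open>Minkowski's inequality in the \<open>L\<^sup>2\<close> space with weights \<open>g\<close>.\<close>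
lemma sqrt_weighted_sum_le:
  fixes f a b c g :: "'x \<Rightarrow> 'y \<Rightarrow> real"
  assumes g: "\<And>x y. x \<in> X \<Longrightarrow> y \<in> Y \<Longrightarrow> 0 \<le> g x y"
    and f: "\<And>x y. x \<in> X \<Longrightarrow> y \<in> Y \<Longrightarrow> 0 \<le> f x y \<and> sqrt (f x y) \<le> a x y + b x y + c x y"
  shows "sqrt (\<Sum>x\<in>X. \<Sum>y\<in>Y. f x y * g x y)
    \<le> sqrt (\<Sum>x\<in>X. \<Sum>y\<in>Y. (a x y)\<^sup>2 * g x y) + sqrt (\<Sum>x\<in>X. \<Sum>y\<in>Y. (b x y)\<^sup>2 * g x y)
      + sqrt (\<Sum>x\<in>X. \<Sum>y\<in>Y. (c x y)\<^sup>2 * g x y)"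
proof -
  define L where "L h = L2_set (\<lambda>z. sqrt (g (fst z) (snd z)) * h (fst z) (snd z)) (X \<times> Y)" for h
  have L: "L h = sqrt (\<Sum>x\<in>X. \<Sum>y\<in>Y. (h x y)\<^sup>2 * g x y)" for h
    using g by (simp add: L_def L2_set_def sum.cartesian_product' power_mult_distrib mult.commute
        cong: sum.cong)
  have "(\<Sum>x\<in>X. \<Sum>y\<in>Y. f x y * g x y) \<le> (\<Sum>x\<in>X. \<Sum>y\<in>Y. (a x y + b x y + c x y)\<^sup>2 * g x y)"
  proof (intro sum_mono)
    fix x y assume xy: "x \<in> X" "y \<in> Y"
    then have "f x y \<le> (a x y + b x y + c x y)\<^sup>2"
      using f by (metis power_mono real_sqrt_ge_zero real_sqrt_pow2)
    then show "f x y * g x y \<le> (a x y + b x y + c x y)\<^sup>2 * g x y"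
      using g[OF xy] by (rule mult_right_mono)
  qed
  then have "sqrt (\<Sum>x\<in>X. \<Sum>y\<in>Y. f x y * g x y) \<le> L (\<lambda>x y. a x y + b x y + c x y)"
    by (simp add: L)
  also have "\<dots> \<le> L a + L b + L c"
    unfolding L_def
    using L2_set_triangle_ineq[of "\<lambda>z. sqrt (g (fst z) (snd z)) * a (fst z) (snd z)
          + sqrt (g (fst z) (snd z)) * b (fst z) (snd z)"
        "\<lambda>z. sqrt (g (fst z) (snd z)) * c (fst z) (snd z)" "X \<times> Y"]
      L2_set_triangle_ineq[of "\<lambda>z. sqrt (g (fst z) (snd z)) * a (fst z) (snd z)"
        "\<lambda>z. sqrt (g (fst z) (snd z)) * b (fst z) (snd z)" "X \<times> Y"]
    by (simp add: distrib_left)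
  finally show ?thesis by (simp only: L)
qed

lemma optimal_coupling_cost_le_glued:
  assumes fin: "finite I" "finite J"
    and \<pi>: "\<pi> \<in> couplings I J p q"
    and opt: "\<forall>\<sigma>\<in>couplings I J p q. (\<Sum>i\<in>I. \<Sum>j\<in>J. w i j * \<pi> i j) \<le> (\<Sum>i\<in>I. \<Sum>j\<in>J. w i j * \<sigma> i j)"
    and \<gamma>: "\<gamma> \<in> couplings (I \<times> J) (I \<times> J) (case_prod \<pi>) (case_prod \<pi>)"
  shows "(\<Sum>i\<in>I. \<Sum>j\<in>J. w i j * \<pi> i j) \<le> (\<Sum>x\<in>I \<times> J. \<Sum>y\<in>I \<times> J. w (fst x) (snd y) * \<gamma> x y)"
proof -
  have "(\<Sum>i\<in>I. \<Sum>j\<in>J. w i j * \<pi> i j) \<le> (\<Sum>i\<in>I. \<Sum>l\<in>J. w i l * outer_marginal I J \<gamma> i l)"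
    using opt outer_marginal_in_couplings[OF fin \<gamma> \<pi>] by blast
  also have "\<dots> = (\<Sum>x\<in>I \<times> J. \<Sum>y\<in>I \<times> J. w (fst x) (snd y) * \<gamma> x y)"
    by (rule sum_outer_marginal[OF fin])
  finally show ?thesis .
qed

text \<open>Abstracted from Gaussians: \<open>w\<close> is the cost between components of the two mixtures,
  \<open>c\<close> the cost between interpolated components, and \<open>tri\<close> is the triangle inequality along
  the interpolants.\<close>
lemma interpolated_coupling_cost_lower_bound:
  fixes w :: "'i \<Rightarrow> 'j \<Rightarrow> real" and c :: "'i \<times> 'j \<Rightarrow> 'i \<times> 'j \<Rightarrow> real"
  assumes fin: "finite I" "finite J"
    and \<pi>: "\<pi> \<in> couplings I J p q"
    and opt: "\<forall>\<sigma>\<in>couplings I J p q. (\<Sum>i\<in>I. \<Sum>j\<in>J. w i j * \<pi> i j) \<le> (\<Sum>i\<in>I. \<Sum>j\<in>J. w i j * \<sigma> i j)"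
    and \<gamma>: "\<gamma> \<in> couplings (I \<times> J) (I \<times> J) (case_prod \<pi>) (case_prod \<pi>)"
    and w: "\<And>i j. i \<in> I \<Longrightarrow> j \<in> J \<Longrightarrow> 0 \<le> w i j"
    and c: "\<And>x y. x \<in> I \<times> J \<Longrightarrow> y \<in> I \<times> J \<Longrightarrow> 0 \<le> c x y"
    and tri: "\<And>i j k l. i \<in> I \<Longrightarrow> j \<in> J \<Longrightarrow> k \<in> I \<Longrightarrow> l \<in> J \<Longrightarrow>
       sqrt (w i l) \<le> s * sqrt (w i j) + sqrt (c (i, j) (k, l)) + (1 - t) * sqrt (w k l)"
    and st: "0 \<le> s" "s \<le> t" "t \<le> 1"
  shows "(t - s)\<^sup>2 * (\<Sum>i\<in>I. \<Sum>j\<in>J. w i j * \<pi> i j) \<le> (\<Sum>x\<in>I \<times> J. \<Sum>y\<in>I \<times> J. c x y * \<gamma> x y)"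
proof -
  let ?P = "I \<times> J"
  define D where "D = (\<Sum>i\<in>I. \<Sum>j\<in>J. w i j * \<pi> i j)"
  define C where "C = (\<Sum>x\<in>?P. \<Sum>y\<in>?P. c x y * \<gamma> x y)"
  have D_eq: "(\<Sum>x\<in>?P. w (fst x) (snd x) * case_prod \<pi> x) = D"
    by (simp add: D_def sum.cartesian_product')
  have "sqrt D \<le> sqrt (\<Sum>x\<in>?P. \<Sum>y\<in>?P. w (fst x) (snd y) * \<gamma> x y)"
    unfolding D_def by (intro real_sqrt_le_mono optimal_coupling_cost_le_glued[OF fin \<pi> opt \<gamma>])
  also have "\<dots> \<le> sqrt (\<Sum>x\<in>?P. \<Sum>y\<in>?P. (s * sqrt (w (fst x) (snd x)))\<^sup>2 * \<gamma> x y)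
      + sqrt (\<Sum>x\<in>?P. \<Sum>y\<in>?P. (sqrt (c x y))\<^sup>2 * \<gamma> x y)
      + sqrt (\<Sum>x\<in>?P. \<Sum>y\<in>?P. ((1 - t) * sqrt (w (fst y) (snd y)))\<^sup>2 * \<gamma> x y)"
    using \<gamma> by (intro sqrt_weighted_sum_le) (auto simp: couplings_def w tri)
  also have "\<dots> = s * sqrt D + sqrt C + (1 - t) * sqrt D"
  proof -
    have "(\<Sum>x\<in>?P. \<Sum>y\<in>?P. (s * sqrt (w (fst x) (snd x)))\<^sup>2 * \<gamma> x y)
        = s\<^sup>2 * (\<Sum>x\<in>?P. \<Sum>y\<in>?P. w (fst x) (snd x) * \<gamma> x y)"
      by (auto simp: sum_distrib_left power_mult_distrib w mult.assoc intro!: sum.cong)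
    moreover have "(\<Sum>x\<in>?P. \<Sum>y\<in>?P. ((1 - t) * sqrt (w (fst y) (snd y)))\<^sup>2 * \<gamma> x y)
        = (1 - t)\<^sup>2 * (\<Sum>x\<in>?P. \<Sum>y\<in>?P. w (fst y) (snd y) * \<gamma> x y)"
      by (auto simp: sum_distrib_left power_mult_distrib w mult.assoc intro!: sum.cong)
    moreover have "(\<Sum>x\<in>?P. \<Sum>y\<in>?P. (sqrt (c x y))\<^sup>2 * \<gamma> x y) = C"
      by (auto simp: C_def c intro!: sum.cong)
    ultimately show ?thesis
      using st coupling_sum_left_marginal[OF \<gamma>] coupling_sum_right_marginal[OF \<gamma>] D_eq
      by (simp add: real_sqrt_mult)
  qed
  finally have "(t - s) * sqrt D \<le> sqrt C" by (simp add: algebra_simps)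
  moreover have "0 \<le> D"
    using \<pi> w by (auto simp: D_def couplings_def intro!: sum_nonneg)
  ultimately have "((t - s) * sqrt D)\<^sup>2 \<le> (sqrt C)\<^sup>2"
    using st by (intro power_mono) auto
  moreover have "0 \<le> C"
    using \<gamma> c by (auto simp: C_def couplings_def intro!: sum_nonneg)
  ultimately show ?thesis using \<open>0 \<le> D\<close> by (simp add: D_def C_def power_mult_distrib)
qed

lemma mix_dist_eqI:
  assumes "\<gamma>\<^sub>0 \<in> couplings I J p q" "mix_cost I m S J m' S' \<gamma>\<^sub>0 \<le> c"
    and "\<And>\<gamma>. \<gamma> \<in> couplings I J p q \<Longrightarrow> c \<le> mix_cost I m S J m' S' \<gamma>"
  shows "mix_dist I p m S J q m' S' = sqrt c"
proof -
  have "mix_cost I m S J m' S' \<gamma>\<^sub>0 = c" using assms by (simp add: order.antisym)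
  then have "Inf (mix_cost I m S J m' S' ` couplings I J p q) = c"
    using assms by (intro cInf_eq_minimum) auto
  then show ?thesis by (simp add: mix_dist_def)
qed

definition interp_means :: "('i \<Rightarrow> real^'n) \<Rightarrow> ('j \<Rightarrow> real^'n) \<Rightarrow> real \<Rightarrow> 'i \<times> 'j \<Rightarrow> real^'n"
  where "interp_means m0 m1 t = (\<lambda>(i, j). interp_mean (m0 i) (m1 j) t)"

definition interp_covs ::
  "('i \<Rightarrow> real^'n^'n) \<Rightarrow> ('j \<Rightarrow> real^'n^'n) \<Rightarrow> real \<Rightarrow> 'i \<times> 'j \<Rightarrow> real^'n^'n"
  where "interp_covs S0 S1 t = (\<lambda>(i, j). interp_cov (S0 i) (S1 j) t)"

lemma mix_cost_interp_diagonal_le: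
  assumes mix0: "gaussian_mixture I p0 m0 S0" and mix1: "gaussian_mixture J p1 m1 S1"
    and \<pi>: "\<pi> \<in> couplings I J p0 p1"
    and s: "0 \<le> s" "s \<le> 1" and t: "0 \<le> t" "t \<le> 1"
  shows "mix_cost (I \<times> J) (interp_means m0 m1 s) (interp_covs S0 S1 s)
      (I \<times> J) (interp_means m0 m1 t) (interp_covs S0 S1 t) (\<lambda>x y. if x = y then case_prod \<pi> x else 0)
    \<le> (t - s)\<^sup>2 * mix_cost I m0 S0 J m1 S1 \<pi>"
proof -
  have fin: "finite I" "finite J" and S0: "\<And>i. i \<in> I \<Longrightarrow> pos_def (S0 i)"
    and S1: "\<And>j. j \<in> J \<Longrightarrow> pos_def (S1 j)"
    using mix0 mix1 by (auto simp: gaussian_mixture_def)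
  have "mix_cost (I \<times> J) (interp_means m0 m1 s) (interp_covs S0 S1 s)
      (I \<times> J) (interp_means m0 m1 t) (interp_covs S0 S1 t) (\<lambda>x y. if x = y then case_prod \<pi> x else 0)
    = (\<Sum>x\<in>I \<times> J. W2sq (interp_means m0 m1 s x) (interp_covs S0 S1 s x)
        (interp_means m0 m1 t x) (interp_covs S0 S1 t x) * case_prod \<pi> x)"
    using fin by (simp add: mix_cost_def if_distrib if_distribR sum.delta' cong: sum.cong if_cong)
  also have "\<dots> = (\<Sum>i\<in>I. \<Sum>j\<in>J. W2sq (interp_mean (m0 i) (m1 j) s) (interp_cov (S0 i) (S1 j) s)
        (interp_mean (m0 i) (m1 j) t) (interp_cov (S0 i) (S1 j) t) * \<pi> i j)"
    by (simp add: interp_means_def interp_covs_def sum.cartesian_product')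
  also have "\<dots> \<le> (\<Sum>i\<in>I. \<Sum>j\<in>J. (t - s)\<^sup>2 * (W2sq (m0 i) (S0 i) (m1 j) (S1 j) * \<pi> i j))"
  proof (intro sum_mono)
    fix i j assume ij: "i \<in> I" "j \<in> J"
    have "0 \<le> \<pi> i j" using \<pi> ij by (simp add: couplings_def)
    with W2sq_interp_le[OF S0 S1, of i j s t "m0 i" "m1 j"] ij s t
    show "W2sq (interp_mean (m0 i) (m1 j) s) (interp_cov (S0 i) (S1 j) s)
        (interp_mean (m0 i) (m1 j) t) (interp_cov (S0 i) (S1 j) t) * \<pi> i j
      \<le> (t - s)\<^sup>2 * (W2sq (m0 i) (S0 i) (m1 j) (S1 j) * \<pi> i j)"
      by (simp add: power2_commute[of s] mult.assoc[symmetric] mult_right_mono)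
  qed
  also have "\<dots> = (t - s)\<^sup>2 * mix_cost I m0 S0 J m1 S1 \<pi>"
    by (simp add: mix_cost_def sum_distrib_left)
  finally show ?thesis .
qed

lemma mix_cost_interp_ge:
  assumes mix0: "gaussian_mixture I p0 m0 S0" and mix1: "gaussian_mixture J p1 m1 S1"
    and \<pi>: "\<pi> \<in> couplings I J p0 p1"
    and opt: "\<forall>\<sigma>\<in>couplings I J p0 p1. mix_cost I m0 S0 J m1 S1 \<pi> \<le> mix_cost I m0 S0 J m1 S1 \<sigma>"
    and \<gamma>: "\<gamma> \<in> couplings (I \<times> J) (I \<times> J) (case_prod \<pi>) (case_prod \<pi>)"
    and st: "0 \<le> s" "s \<le> t" "t \<le> 1"
  shows "(t - s)\<^sup>2 * mix_cost I m0 S0 J m1 S1 \<pi>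
    \<le> mix_cost (I \<times> J) (interp_means m0 m1 s) (interp_covs S0 S1 s)
        (I \<times> J) (interp_means m0 m1 t) (interp_covs S0 S1 t) \<gamma>"
proof -
  have fin: "finite I" "finite J" and S0: "\<And>i. i \<in> I \<Longrightarrow> pos_def (S0 i)"
    and S1: "\<And>j. j \<in> J \<Longrightarrow> pos_def (S1 j)"
    using mix0 mix1 by (auto simp: gaussian_mixture_def)
  show ?thesis
    unfolding mix_cost_def
  proof (rule interpolated_coupling_cost_lower_bound[OF fin \<pi> _ \<gamma> _ _ _ st])
    show "\<forall>\<sigma>\<in>couplings I J p0 p1. (\<Sum>i\<in>I. \<Sum>j\<in>J. W2sq (m0 i) (S0 i) (m1 j) (S1 j) * \<pi> i j)
        \<le> (\<Sum>i\<in>I. \<Sum>j\<in>J. W2sq (m0 i) (S0 i) (m1 j) (S1 j) * \<sigma> i j)"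
      using opt by (simp add: mix_cost_def)
    show "0 \<le> W2sq (m0 i) (S0 i) (m1 j) (S1 j)" if "i \<in> I" "j \<in> J" for i j
      using that by (intro W2sq_nonneg S0 S1)
    show "0 \<le> W2sq (interp_means m0 m1 s x) (interp_covs S0 S1 s x)
        (interp_means m0 m1 t y) (interp_covs S0 S1 t y)" if "x \<in> I \<times> J" "y \<in> I \<times> J" for x y
      using that st by (auto simp: interp_means_def interp_covs_def intro!: W2sq_nonneg
          interp_cov_pos_def S0 S1)
    show "sqrt (W2sq (m0 i) (S0 i) (m1 l) (S1 l)) \<le> s * sqrt (W2sq (m0 i) (S0 i) (m1 j) (S1 j))
        + sqrt (W2sq (interp_means m0 m1 s (i, j)) (interp_covs S0 S1 s (i, j))
            (interp_means m0 m1 t (k, l)) (interp_covs S0 S1 t (k, l)))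
        + (1 - t) * sqrt (W2sq (m0 k) (S0 k) (m1 l) (S1 l))"
      if "i \<in> I" "j \<in> J" "k \<in> I" "l \<in> J" for i j k l
      using that st W2_le_through_interpolants[OF S0 S0 S1 S1, of i k j l s t]
      by (simp add: interp_means_def interp_covs_def)
  qed
qed

theorem theorem2:
  fixes N0 N1 :: nat
    and p0 p1 :: "nat \<Rightarrow> real"
    and m0 m1 :: "nat \<Rightarrow> real^'n"
    and S0 S1 :: "nat \<Rightarrow> real^'n^'n"
    and pistar :: "nat \<Rightarrow> nat \<Rightarrow> real"
    and s t :: real
  assumes mix0: "gaussian_mixture {..<N0} p0 m0 S0"
    and mix1: "gaussian_mixture {..<N1} p1 m1 S1"
    and coup: "pistar \<in> couplings {..<N0} {..<N1} p0 p1"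
    and opt: "\<forall>\<pi>\<in>couplings {..<N0} {..<N1} p0 p1.
                mix_cost {..<N0} m0 S0 {..<N1} m1 S1 pistar
                \<le> mix_cost {..<N0} m0 S0 {..<N1} m1 S1 \<pi>"
    and st: "0 \<le> s" "s < t" "t \<le> 1"
  shows "mix_dist ({..<N0} \<times> {..<N1}) (\<lambda>(i, j). pistar i j)
            (\<lambda>(i, j). interp_mean (m0 i) (m1 j) s) (\<lambda>(i, j). interp_cov (S0 i) (S1 j) s)
          ({..<N0} \<times> {..<N1}) (\<lambda>(i, j). pistar i j)
            (\<lambda>(i, j). interp_mean (m0 i) (m1 j) t) (\<lambda>(i, j). interp_cov (S0 i) (S1 j) t)
         = (t - s) * mix_dist {..<N0} p0 m0 S0 {..<N1} p1 m1 S1"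
proof -
  let ?D = "mix_cost {..<N0} m0 S0 {..<N1} m1 S1 pistar"
  have "mix_dist {..<N0} p0 m0 S0 {..<N1} p1 m1 S1 = sqrt ?D"
    using coup opt by (intro mix_dist_eqI) auto
  moreover have "mix_dist ({..<N0} \<times> {..<N1}) (case_prod pistar)
      (interp_means m0 m1 s) (interp_covs S0 S1 s) ({..<N0} \<times> {..<N1}) (case_prod pistar)
      (interp_means m0 m1 t) (interp_covs S0 S1 t) = sqrt ((t - s)\<^sup>2 * ?D)"
  proof (rule mix_dist_eqI)
    show "(\<lambda>x y. if x = y then case_prod pistar x else 0)
        \<in> couplings ({..<N0} \<times> {..<N1}) ({..<N0} \<times> {..<N1}) (case_prod pistar) (case_prod pistar)"
      using coup by (intro diagonal_coupling) (auto simp: couplings_def)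
  qed (use mix0 mix1 coup opt st in \<open>auto intro: mix_cost_interp_diagonal_le mix_cost_interp_ge\<close>)
  ultimately show ?thesis
    using st by (simp add: interp_means_def interp_covs_def real_sqrt_mult)
qed

end
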